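(* Let a pure two-mode Gaussian state have covariance matrix $$\boldsymbol\Sigma=\begin{bmatrix}a\,\mathbf S(r)&\mathbf R(\phi)\mathbf C\\ [\mathbf R(\phi)\mathbf C]^\top&b\,\mathbb{I}_2\end{bmatrix},$$ where $\mathbf S(r)=\mathrm{diag}(r,r^{-1})$ with $r>0$, $\mathbf R(\phi)=\begin{bmatrix}\cos\phi&-\sin\phi\\ \sin\phi&\cos\phi\end{bmatrix}$, $\mathbf C=\mathrm{diag}(c_+,c_-)$, and $a,b,c_\pm,\phi$ real. Then $a=b$.
   Context: Quadratures $\mathbf R=(q_S,p_S,q_I,p_I)^\top$ with $[R_i,R_j]=\mathrm{i}\Omega_{ij}$, $\boldsymbol\Omega=\mathbb{I}_2\otimes\begin{bmatrix}0&1\\-1&0\end{bmatrix}$; covariance $\Sigma_{ij}=\tfrac12\langle R_iR_j+R_jR_i\rangle-\langle R_i\rangle\langle R_j\rangle$, satisfying $\boldsymbol\Sigma+\mathrm{i}\boldsymbol\Omega/2\succeq0$. In this convention a two-mode Gaussian state is pure iff $\det\boldsymbol\Sigma=1/16$. *)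

theory Defs
  imports Complex_Main "Jordan_Normal_Form.Determinant"
begin

text \<open>Quadratures R = (q_S, p_S, q_I, p_I), indexed 0..3.\<close>

definition symp_form :: "real mat" where
  "symp_form = mat_of_rows_list 4
     [[0, 1, 0, 0], [-1, 0, 0, 0], [0, 0, 0, 1], [0, 0, -1, 0]]"

text \<open>Block covariance matrix [[a S(r), R(phi) C], [(R(phi) C)^T, b I]]
  with S(r) = diag(r, 1/r), R(phi) rotation, C = diag(cp, cm).\<close>
definition cov_mat :: "real \<Rightarrow> real \<Rightarrow> real \<Rightarrow> real \<Rightarrow> real \<Rightarrow> real \<Rightarrow> real mat" where
  "cov_mat a b r cp cm phi = mat_of_rows_list 4
     [[a * r, 0, cos phi * cp, - sin phi * cm],
      [0, a / r, sin phi * cp, cos phi * cm],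
      [cos phi * cp, sin phi * cp, b, 0],
      [- sin phi * cm, cos phi * cm, 0, b]]"

definition psd_cmat :: "nat \<Rightarrow> complex mat \<Rightarrow> bool" where
  "psd_cmat n M \<longleftrightarrow> M \<in> carrier_mat n n \<and>
     (\<forall>v :: nat \<Rightarrow> complex.
        (\<Sum>i<n. \<Sum>j<n. cnj (v i) * M $$ (i, j) * v j) \<in> \<real> \<and>
        0 \<le> Re (\<Sum>i<n. \<Sum>j<n. cnj (v i) * M $$ (i, j) * v j))"

definition bona_fide_cov :: "real mat \<Rightarrow> bool" where
  "bona_fide_cov S \<longleftrightarrow> S \<in> carrier_mat 4 4 \<and>
     psd_cmat 4 (map_mat complex_of_real S + (\<i> / 2) \<cdot>\<^sub>m map_mat complex_of_real symp_form)"

definition pure_gaussian_cov :: "real mat \<Rightarrow> bool" where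
  "pure_gaussian_cov S \<longleftrightarrow> bona_fide_cov S \<and> det S = 1 / 16"

end

theory Submission
  imports Defs
begin

text \<open>Write \<Sigma> = [[A, C], [C^T, b I]] with A = a S(r); the rotation only enters through C.
  If b > 1/2, then b I + i J/2 is invertible and positivity of \<Sigma> + i \<Omega>/2 passes to the Schur
  complement (b^2 - 1/4) A - b C C^T + i (b^2 - 1/4 + det C) J/2. Its determinant, combined with
  det \<Sigma> = 1/16, bounds the symplectic invariant: a^2 + b^2 + 2 det C \<le> 1/2; its real part
  dominates b C C^T, which gives a b \<ge> |det C|. Since also det \<Sigma> \<le> (a b - |det C|)^2, we get
  a b - |det C| \<ge> 1/4, hence (a - b)^2 \<le> 1/2 - 2 det C - 2 a b \<le> 0.
  If b = 1/2, positivity forces C = 0, and then a^2/4 = 1/16.\<close>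

lemma det_2x2:
  fixes A :: "'a::comm_ring_1 mat"
  assumes A: "A \<in> carrier_mat 2 2"
  shows "det A = A$$(0,0) * A$$(1,1) - A$$(0,1) * A$$(1,0)"
  using A
  by (subst laplace_expansion_row[OF A, of 0])
     (auto simp: lessThan_Suc numeral_2_eq_2 cofactor_def det_single mat_delete_def)

lemma det_3x3:
  fixes A :: "'a::comm_ring_1 mat"
  assumes A: "A \<in> carrier_mat 3 3"
  shows "det A = A$$(0,0) * (A$$(1,1) * A$$(2,2) - A$$(1,2) * A$$(2,1))
    - A$$(0,1) * (A$$(1,0) * A$$(2,2) - A$$(1,2) * A$$(2,0))
    + A$$(0,2) * (A$$(1,0) * A$$(2,1) - A$$(1,1) * A$$(2,0))"
  using A
  by (subst laplace_expansion_row[OF A, of 0])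
     (auto simp: lessThan_Suc numeral_3_eq_3 cofactor_def det_2x2 mat_delete_def algebra_simps eval_nat_numeral)

lemma det_4x4:
  fixes A :: "'a::comm_ring_1 mat"
  assumes A: "A \<in> carrier_mat 4 4"
  shows "det A =
      A$$(0,0) * (A$$(1,1) * (A$$(2,2)*A$$(3,3) - A$$(2,3)*A$$(3,2)) - A$$(1,2) * (A$$(2,1)*A$$(3,3) - A$$(2,3)*A$$(3,1)) + A$$(1,3) * (A$$(2,1)*A$$(3,2) - A$$(2,2)*A$$(3,1)))
    - A$$(0,1) * (A$$(1,0) * (A$$(2,2)*A$$(3,3) - A$$(2,3)*A$$(3,2)) - A$$(1,2) * (A$$(2,0)*A$$(3,3) - A$$(2,3)*A$$(3,0)) + A$$(1,3) * (A$$(2,0)*A$$(3,2) - A$$(2,2)*A$$(3,0)))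
    + A$$(0,2) * (A$$(1,0) * (A$$(2,1)*A$$(3,3) - A$$(2,3)*A$$(3,1)) - A$$(1,1) * (A$$(2,0)*A$$(3,3) - A$$(2,3)*A$$(3,0)) + A$$(1,3) * (A$$(2,0)*A$$(3,1) - A$$(2,1)*A$$(3,0)))
    - A$$(0,3) * (A$$(1,0) * (A$$(2,1)*A$$(3,2) - A$$(2,2)*A$$(3,1)) - A$$(1,1) * (A$$(2,0)*A$$(3,2) - A$$(2,2)*A$$(3,0)) + A$$(1,2) * (A$$(2,0)*A$$(3,1) - A$$(2,1)*A$$(3,0)))"
  using A
  by (subst laplace_expansion_row[OF A, of 0])
     (auto simp: lessThan_Suc eval_nat_numeral cofactor_def det_3x3 mat_delete_def algebra_simps)

lemma sum_lessThan_4: "(\<Sum>i<(4::nat). f i) = f 0 + f 1 + f 2 + f 3"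
  by (simp add: numeral_eq_Suc lessThan_Suc add_ac)

lemma quadratic_nonneg_imp_discrim_le:
  fixes A B C :: real
  assumes nonneg: "\<And>t. 0 \<le> A * t\<^sup>2 + 2 * B * t + C" and "0 \<le> A"
  shows "B\<^sup>2 \<le> A * C"
proof (cases "A = 0")
  case True
  have "B = 0"
  proof (rule ccontr)
    assume "B \<noteq> 0"
    then show False
      using nonneg[of "- (C + 1) / (2 * B)"] True by (simp add: field_simps)
  qed
  then show ?thesis using True by simp
next
  case False
  with \<open>0 \<le> A\<close> have "0 < A" by simp
  have "0 \<le> A * (- B / A)\<^sup>2 + 2 * B * (- B / A) + C" by (rule nonneg)
  with \<open>0 < A\<close> have "0 \<le> (A * C - B\<^sup>2) / A" by (simp add: field_simps power2_eq_square)
  with \<open>0 < A\<close> show ?thesis by (simp add: zero_le_divide_iff)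
qed

text \<open>The form is w^* [[P00, P01 + i k/2], [P01 - i k/2, P11]] w at w = (x + i u, y + i v).\<close>
lemma hermitian_2x2_form_nonneg_imp_minors:
  fixes P00 P01 P11 k :: real
  assumes nonneg: "\<And>x y u v. 0 \<le> P00 * (x\<^sup>2 + u\<^sup>2) + 2 * P01 * (x * y + u * v)
                                  + P11 * (y\<^sup>2 + v\<^sup>2) - k * (x * v - y * u)"
  shows "0 \<le> P00" and "0 \<le> P11" and "k\<^sup>2 / 4 \<le> P00 * P11 - P01\<^sup>2"
proof -
  show P00: "0 \<le> P00" using nonneg[where x = 1 and y = 0 and u = 0 and v = 0] by simp
  show P11: "0 \<le> P11" using nonneg[where x = 0 and y = 1 and u = 0 and v = 0] by simp
  define \<beta> where "\<beta> = P01\<^sup>2 + k\<^sup>2 / 4"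
  have \<beta>: "0 \<le> \<beta>" by (simp add: \<beta>_def)
  have "0 \<le> (P00 * \<beta>) * t\<^sup>2 + 2 * \<beta> * t + P11" for t
  proof -
    have "0 \<le> P00 * ((t * P01)\<^sup>2 + (t * k / 2)\<^sup>2) + 2 * P01 * (t * P01 * 1 + t * k / 2 * 0)
              + P11 * (1\<^sup>2 + 0\<^sup>2) - k * (t * P01 * 0 - 1 * (t * k / 2))"
      by (rule nonneg)
    also have "\<dots> = (P00 * \<beta>) * t\<^sup>2 + 2 * \<beta> * t + P11"
      by (simp add: \<beta>_def power2_eq_square field_simps)
    finally show ?thesis .
  qed
  with P00 \<beta> have "\<beta>\<^sup>2 \<le> (P00 * \<beta>) * P11"
    by (intro quadratic_nonneg_imp_discrim_le) simp_all
  then have "\<beta> * \<beta> \<le> \<beta> * (P00 * P11)" by (simp add: power2_eq_square ac_simps)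
  then have "\<beta> \<le> P00 * P11"
    using P00 P11 \<beta> by (cases "\<beta> = 0") (simp_all add: mult_le_cancel_left)
  then show "k\<^sup>2 / 4 \<le> P00 * P11 - P01\<^sup>2" by (simp add: \<beta>_def)
qed

lemma two_abs_le_add_of_sq_le_mult:
  fixes u v c :: real
  assumes "0 \<le> u" "0 \<le> v" "c\<^sup>2 \<le> u * v"
  shows "2 * \<bar>c\<bar> \<le> u + v"
proof (rule power2_le_imp_le)
  have "(u + v)\<^sup>2 = (u - v)\<^sup>2 + 4 * (u * v)" by (simp add: power2_eq_square algebra_simps)
  moreover have "0 \<le> (u - v)\<^sup>2" by simp
  moreover have "(2 * \<bar>c\<bar>)\<^sup>2 = 4 * c\<^sup>2" by (simp add: power_mult_distrib)
  ultimately show "(2 * \<bar>c\<bar>)\<^sup>2 \<le> (u + v)\<^sup>2" using assms(3) by linarith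
  show "0 \<le> u + v" using assms by simp
qed

lemma det_2x2_psd_mono:
  fixes p00 p01 p11 m00 m01 m11 :: real
  assumes "0 \<le> p00" "0 \<le> p11" "p01\<^sup>2 \<le> p00 * p11"
    and "0 \<le> m00" "0 \<le> m11" "m01\<^sup>2 \<le> m00 * m11"
  shows "m00 * m11 - m01\<^sup>2 \<le> (p00 + m00) * (p11 + m11) - (p01 + m01)\<^sup>2"
proof -
  have "(p01 * m01)\<^sup>2 \<le> (p00 * m11) * (p11 * m00)"
    using assms mult_mono[of "p01\<^sup>2" "p00 * p11" "m01\<^sup>2" "m00 * m11"]
    by (simp add: power_mult_distrib algebra_simps)
  then have "2 * \<bar>p01 * m01\<bar> \<le> p00 * m11 + p11 * m00"
    using assms by (intro two_abs_le_add_of_sq_le_mult) simp_all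
  then show ?thesis
    using assms(3) by (simp add: power2_eq_square algebra_simps abs_le_iff)
qed

text \<open>Here a^2 + b^2 + 2 c is the symplectic invariant det A + det B + 2 det C.\<close>
lemma symplectic_invariant_le_half:
  fixes a b c n :: real
  defines "x \<equiv> b\<^sup>2 - 1/4"
  assumes "0 < x"
    and det: "a\<^sup>2 * b\<^sup>2 - a * b * n + c\<^sup>2 = 1/16"
    and schur: "(x + c)\<^sup>2 / 4 \<le> x\<^sup>2 * a\<^sup>2 - x * a * b * n + b\<^sup>2 * c\<^sup>2"
  shows "a\<^sup>2 + b\<^sup>2 + 2 * c \<le> 1/2"
proof -
  have "a * b * n = a\<^sup>2 * b\<^sup>2 + c\<^sup>2 - 1/16" using det by linarith
  then have "x * a * b * n = x * (a\<^sup>2 * b\<^sup>2 + c\<^sup>2 - 1/16)" by (metis mult.assoc)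
  moreover have "x\<^sup>2 * a\<^sup>2 - x * (a\<^sup>2 * b\<^sup>2 + c\<^sup>2 - 1/16) + b\<^sup>2 * c\<^sup>2 - (x + c)\<^sup>2 / 4
      = x / 4 * (1/2 - a\<^sup>2 - b\<^sup>2 - 2 * c)"
    by (simp add: x_def power2_eq_square field_simps)
  ultimately have "0 \<le> x / 4 * (1/2 - a\<^sup>2 - b\<^sup>2 - 2 * c)"
    using schur by linarith
  with \<open>0 < x\<close> show ?thesis by (simp add: zero_le_mult_iff)
qed

text \<open>The hypotheses say P = x A - b M \<succeq> 0 for A = diag (a r, a / r) and M = C C^T. Then
  x A = P + b M is a sum of positive semidefinite matrices, so det (x A) \<ge> det (b M).\<close>
lemma abs_le_mult_of_schur_psd:
  fixes a b r c M00 M01 M11 :: real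
  defines "x \<equiv> b\<^sup>2 - 1/4"
  assumes r: "0 < r" and a: "0 \<le> a" and b: "1/2 < b"
    and M00: "0 \<le> M00" and M11: "0 \<le> M11" and lagrange: "M00 * M11 - M01\<^sup>2 = c\<^sup>2"
    and P00: "0 \<le> x * a * r - b * M00" and P11: "0 \<le> x * a / r - b * M11"
    and P_psd: "(- b * M01)\<^sup>2 \<le> (x * a * r - b * M00) * (x * a / r - b * M11)"
  shows "\<bar>c\<bar> \<le> a * b"
proof -
  have "(1/2)\<^sup>2 < b\<^sup>2" using b by (intro power_strict_mono) simp_all
  then have x: "0 < x" by (simp add: x_def power_divide)
  have "M01\<^sup>2 \<le> M00 * M11" using lagrange zero_le_power2[of c] by linarith
  then have M_psd: "(b * M01)\<^sup>2 \<le> (b * M00) * (b * M11)"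
    using mult_left_mono[of "M01\<^sup>2" "M00 * M11" "b\<^sup>2"]
    by (simp add: power_mult_distrib power2_eq_square ac_simps)
  have "(b * c)\<^sup>2 = b\<^sup>2 * (M00 * M11 - M01\<^sup>2)" by (simp add: lagrange power_mult_distrib)
  also have "\<dots> = (b * M00) * (b * M11) - (b * M01)\<^sup>2" by (simp add: power2_eq_square algebra_simps)
  also have "\<dots> \<le> ((x * a * r - b * M00) + b * M00) * ((x * a / r - b * M11) + b * M11)
                   - (- b * M01 + b * M01)\<^sup>2"
    using P00 P11 P_psd M00 M11 M_psd b by (intro det_2x2_psd_mono) simp_all
  also have "\<dots> = (x * a)\<^sup>2"
    using r by (simp add: power2_eq_square)
  finally have "(b * \<bar>c\<bar>)\<^sup>2 \<le> (x * a)\<^sup>2" by (simp add: power_mult_distrib)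
  moreover have "0 \<le> x * a" using x a by simp
  ultimately have "b * \<bar>c\<bar> \<le> x * a" by (rule power2_le_imp_le)
  moreover have "x * a = b * (a * b) - a / 4" by (simp add: x_def power2_eq_square algebra_simps)
  ultimately have "b * \<bar>c\<bar> \<le> b * (a * b)" using a by linarith
  then show ?thesis using b by simp
qed

lemma eq_of_symplectic_invariants:
  fixes a b c n :: real
  assumes "\<bar>c\<bar> \<le> a * b" and "2 * \<bar>c\<bar> \<le> n"
    and delta: "a\<^sup>2 + b\<^sup>2 + 2 * c \<le> 1/2"
    and det: "a\<^sup>2 * b\<^sup>2 - a * b * n + c\<^sup>2 = 1/16"
  shows "a = b"
proof -
  have "a * b * (2 * \<bar>c\<bar>) \<le> a * b * n"
    using assms(1,2) by (intro mult_left_mono) simp_all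
  with det have "(1/4)\<^sup>2 \<le> (a * b - \<bar>c\<bar>)\<^sup>2"
    by (simp add: power2_eq_square algebra_simps)
  moreover have "0 \<le> a * b - \<bar>c\<bar>" using assms(1) by simp
  ultimately have "1/4 \<le> a * b - \<bar>c\<bar>" by (rule power2_le_imp_le)
  moreover have "(a - b)\<^sup>2 = a\<^sup>2 + b\<^sup>2 - 2 * (a * b)" by (simp add: power2_diff)
  moreover have "- \<bar>c\<bar> \<le> c" by simp
  ultimately have "(a - b)\<^sup>2 \<le> 0" using delta by linarith
  then show ?thesis by simp
qed

text \<open>The real part of v^* (S + i \<Omega>/2) v for v = X + i Y.\<close>
definition uncertainty_form :: "real mat \<Rightarrow> (nat \<Rightarrow> real) \<Rightarrow> (nat \<Rightarrow> real) \<Rightarrow> real" where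
  "uncertainty_form S X Y =
     (\<Sum>i<4. \<Sum>j<4. S $$ (i, j) * (X i * X j + Y i * Y j)) - (X 0 * Y 1 - X 1 * Y 0 + X 2 * Y 3 - X 3 * Y 2)"

lemma bona_fide_cov_uncertainty_form_nonneg:
  assumes "bona_fide_cov S"
  shows "0 \<le> uncertainty_form S X Y"
proof -
  let ?H = "map_mat complex_of_real S + (\<i> / 2) \<cdot>\<^sub>m map_mat complex_of_real symp_form"
  let ?v = "\<lambda>i. Complex (X i) (Y i)"
  have S: "S \<in> carrier_mat 4 4" and "psd_cmat 4 ?H"
    using assms unfolding bona_fide_cov_def by auto
  then have "0 \<le> Re (\<Sum>i<4. \<Sum>j<4. cnj (?v i) * ?H $$ (i, j) * ?v j)"
    unfolding psd_cmat_def by (blast dest: spec[of _ ?v])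
  also have "\<dots> = (\<Sum>i<4. \<Sum>j<4. S $$ (i, j) * (X i * X j + Y i * Y j)
                    + symp_form $$ (i, j) / 2 * (Y i * X j - X i * Y j))"
  proof -
    have "?H $$ (i, j) = Complex (S $$ (i, j)) (symp_form $$ (i, j) / 2)" if "i < 4" "j < 4" for i j
      using S that by (simp add: symp_form_def mat_of_rows_list_def complex_eq_iff)
    then show ?thesis
      unfolding Re_sum by (intro sum.cong refl) (simp add: algebra_simps)
  qed
  also have "\<dots> = uncertainty_form S X Y"
    unfolding uncertainty_form_def sum.distrib
    by (simp add: sum_lessThan_4 symp_form_def mat_of_rows_list_def field_simps)
  finally show ?thesis .
qed

definition block_cov :: "real \<Rightarrow> real \<Rightarrow> real \<Rightarrow> real \<Rightarrow> real \<Rightarrow> real \<Rightarrow> real \<Rightarrow> real mat" where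
  "block_cov a b r c00 c01 c10 c11 = mat_of_rows_list 4
     [[a * r, 0, c00, c01], [0, a / r, c10, c11], [c00, c10, b, 0], [c01, c11, 0, b]]"

lemma cov_mat_eq_block_cov:
  "cov_mat a b r cp cm phi = block_cov a b r (cos phi * cp) (- sin phi * cm) (sin phi * cp) (cos phi * cm)"
  by (simp add: cov_mat_def block_cov_def)

lemma uncertainty_form_block_cov:
  "uncertainty_form (block_cov a b r c00 c01 c10 c11) X Y =
     a * r * ((X 0)\<^sup>2 + (Y 0)\<^sup>2) + a / r * ((X 1)\<^sup>2 + (Y 1)\<^sup>2) + b * ((X 2)\<^sup>2 + (Y 2)\<^sup>2 + (X 3)\<^sup>2 + (Y 3)\<^sup>2)
   + 2 * (c00 * (X 0 * X 2 + Y 0 * Y 2) + c01 * (X 0 * X 3 + Y 0 * Y 3)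
        + c10 * (X 1 * X 2 + Y 1 * Y 2) + c11 * (X 1 * X 3 + Y 1 * Y 3))
   - (X 0 * Y 1 - X 1 * Y 0 + X 2 * Y 3 - X 3 * Y 2)"
  unfolding uncertainty_form_def
  by (simp add: sum_lessThan_4 block_cov_def mat_of_rows_list_def algebra_simps power2_eq_square)

lemma det_block_cov:
  assumes "r \<noteq> 0"
  shows "det (block_cov a b r c00 c01 c10 c11) =
    a\<^sup>2 * b\<^sup>2 - a * b * ((c00\<^sup>2 + c01\<^sup>2) / r + r * (c10\<^sup>2 + c11\<^sup>2)) + (c00 * c11 - c01 * c10)\<^sup>2"
proof -
  have "block_cov a b r c00 c01 c10 c11 \<in> carrier_mat 4 4"
    by (rule carrier_matI) (simp_all add: block_cov_def mat_of_rows_list_def)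
  then show ?thesis
    using assms
    by (simp add: det_4x4 block_cov_def mat_of_rows_list_def field_simps power2_eq_square)
qed

text \<open>The test vector is (x u, -(b I - i J/2) C^T u) with u = p + i q, i.e. the vector realising the
  Schur complement of b I + i J/2, scaled by x = det (b I + i J/2).\<close>
lemma block_cov_schur_complement_nonneg:
  fixes a b r c00 c01 c10 c11 p0 p1 q0 q1 :: real
  defines "x \<equiv> b\<^sup>2 - 1/4"
    and "M00 \<equiv> c00\<^sup>2 + c01\<^sup>2" and "M01 \<equiv> c00 * c10 + c01 * c11" and "M11 \<equiv> c10\<^sup>2 + c11\<^sup>2"
    and "c \<equiv> c00 * c11 - c01 * c10"
  assumes r: "r \<noteq> 0" and x: "0 < x"
    and form: "\<And>X Y. 0 \<le> uncertainty_form (block_cov a b r c00 c01 c10 c11) X Y"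
  shows "0 \<le> (x * a * r - b * M00) * (p0\<^sup>2 + q0\<^sup>2) + 2 * (- b * M01) * (p0 * p1 + q0 * q1)
              + (x * a / r - b * M11) * (p1\<^sup>2 + q1\<^sup>2) - (x + c) * (p0 * q1 - p1 * q0)"
    (is "0 \<le> ?schur")
proof -
  define g0 g1 h0 h1
    where "g0 = c00 * p0 + c10 * p1" and "g1 = c01 * p0 + c11 * p1"
      and "h0 = c00 * q0 + c10 * q1" and "h1 = c01 * q0 + c11 * q1"
  have "uncertainty_form (block_cov a b r c00 c01 c10 c11)
      ((!) [x * p0, x * p1, - (b * g0 + h1 / 2), - (b * g1 - h0 / 2)])
      ((!) [x * q0, x * q1, - (b * h0 - g1 / 2), - (b * h1 + g0 / 2)]) = x * ?schur"
    using r unfolding uncertainty_form_block_cov x_def M00_def M01_def M11_def c_def g0_def g1_def h0_def h1_def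
    by (simp add: field_simps power2_eq_square)
  with form have "0 \<le> x * ?schur" by metis
  with x show ?thesis by (simp add: zero_le_mult_iff)
qed

lemma block_cov_vacuum_imp_uncorrelated:
  assumes r: "0 < r" and a: "0 \<le> a"
    and form: "\<And>X Y. 0 \<le> uncertainty_form (block_cov a (1/2) r c00 c01 c10 c11) X Y"
  shows "c00 = 0" and "c01 = 0" and "c10 = 0" and "c11 = 0"
proof -
  have linear_coeff_zero: "\<gamma> = 0" if "\<And>s. 0 \<le> \<alpha> * s\<^sup>2 + 2 * \<gamma> * s + 0" "0 \<le> \<alpha>" for \<alpha> \<gamma> :: real
    using quadratic_nonneg_imp_discrim_le[OF that] by simp
  have "0 \<le> a * r * s\<^sup>2 + 2 * c00 * s + 0" for s
    using form[of "(!) [s, 0, 1, 0]" "(!) [0, 0, 0, 1]"] by (simp add: uncertainty_form_block_cov)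
  then show "c00 = 0" by (rule linear_coeff_zero) (use a r in simp)
  have "0 \<le> a * r * s\<^sup>2 + 2 * c01 * s + 0" for s
    using form[of "(!) [0, 0, 1, 0]" "(!) [s, 0, 0, 1]"] by (simp add: uncertainty_form_block_cov)
  then show "c01 = 0" by (rule linear_coeff_zero) (use a r in simp)
  have "0 \<le> a / r * s\<^sup>2 + 2 * c10 * s + 0" for s
    using form[of "(!) [0, s, 1, 0]" "(!) [0, 0, 0, 1]"] by (simp add: uncertainty_form_block_cov)
  then show "c10 = 0" by (rule linear_coeff_zero) (use a r in simp)
  have "0 \<le> a / r * s\<^sup>2 + 2 * c11 * s + 0" for s
    using form[of "(!) [0, 0, 1, 0]" "(!) [0, s, 0, 1]"] by (simp add: uncertainty_form_block_cov)
  then show "c11 = 0" by (rule linear_coeff_zero) (use a r in simp)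
qed

lemma block_cov_eq_nonvacuum:
  assumes r: "0 < r" and a: "0 \<le> a" and b: "1/2 < b"
    and form: "\<And>X Y. 0 \<le> uncertainty_form (block_cov a b r c00 c01 c10 c11) X Y"
    and det: "det (block_cov a b r c00 c01 c10 c11) = 1/16"
  shows "a = b"
proof -
  define x where "x = b\<^sup>2 - 1/4"
  define M00 M01 M11 where "M00 = c00\<^sup>2 + c01\<^sup>2" and "M01 = c00 * c10 + c01 * c11"
    and "M11 = c10\<^sup>2 + c11\<^sup>2"
  define c where "c = c00 * c11 - c01 * c10"
  define n where "n = M00 / r + r * M11"
  define P00 P01 P11 where "P00 = x * a * r - b * M00" and "P01 = - b * M01"
    and "P11 = x * a / r - b * M11"
  have "(1/2)\<^sup>2 < b\<^sup>2" using b by (intro power_strict_mono) simp_all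
  then have x: "0 < x" by (simp add: x_def power_divide)
  have "0 \<le> P00 * (p0\<^sup>2 + q0\<^sup>2) + 2 * P01 * (p0 * p1 + q0 * q1) + P11 * (p1\<^sup>2 + q1\<^sup>2)
            - (x + c) * (p0 * q1 - p1 * q0)" for p0 p1 q0 q1
    unfolding P00_def P01_def P11_def M00_def M01_def M11_def c_def x_def
    by (rule block_cov_schur_complement_nonneg) (use r x form in \<open>simp_all add: x_def\<close>)
  note minors = hermitian_2x2_form_nonneg_imp_minors[OF this]
  have P00: "0 \<le> P00" and P11: "0 \<le> P11" and detP: "(x + c)\<^sup>2 / 4 \<le> P00 * P11 - P01\<^sup>2"
    by (fact minors)+
  have lagrange: "M00 * M11 - M01\<^sup>2 = c\<^sup>2"
    by (simp add: M00_def M01_def M11_def c_def power2_eq_square algebra_simps)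
  have "P00 * P11 - P01\<^sup>2 = x\<^sup>2 * a\<^sup>2 - x * a * b * n + b\<^sup>2 * (M00 * M11 - M01\<^sup>2)"
    using r by (simp add: P00_def P01_def P11_def n_def power2_eq_square field_simps)
  then have detP_eq: "P00 * P11 - P01\<^sup>2 = x\<^sup>2 * a\<^sup>2 - x * a * b * n + b\<^sup>2 * c\<^sup>2"
    by (simp only: lagrange)
  have det_eq: "a\<^sup>2 * b\<^sup>2 - a * b * n + c\<^sup>2 = 1/16"
    using det det_block_cov[of r a b c00 c01 c10 c11] r
    by (simp add: n_def M00_def M11_def c_def)
  have delta: "a\<^sup>2 + b\<^sup>2 + 2 * c \<le> 1/2"
    using symplectic_invariant_le_half[of b a n c] x det_eq detP detP_eq by (simp add: x_def)
  have M00: "0 \<le> M00" and M11: "0 \<le> M11" by (simp_all add: M00_def M11_def)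
  have "0 \<le> (x + c)\<^sup>2 / 4" by simp
  with detP have "P01\<^sup>2 \<le> P00 * P11" by linarith
  with r a b M00 M11 lagrange P00 P11 have "\<bar>c\<bar> \<le> a * b"
    unfolding P00_def P01_def P11_def x_def by (rule abs_le_mult_of_schur_psd)
  moreover have "2 * \<bar>c\<bar> \<le> n"
  proof -
    have "c\<^sup>2 \<le> M00 * M11" using lagrange zero_le_power2[of M01] by linarith
    then show ?thesis
      unfolding n_def using r M00 M11 by (intro two_abs_le_add_of_sq_le_mult) simp_all
  qed
  ultimately show ?thesis
    using delta det_eq by (rule eq_of_symplectic_invariants)
qed

lemma pure_block_cov_imp_eq:
  assumes r: "0 < r" and pure: "pure_gaussian_cov (block_cov a b r c00 c01 c10 c11)"
  shows "a = b"
proof -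
  have form: "\<And>X Y. 0 \<le> uncertainty_form (block_cov a b r c00 c01 c10 c11) X Y"
    and det: "det (block_cov a b r c00 c01 c10 c11) = 1/16"
    using pure bona_fide_cov_uncertainty_form_nonneg unfolding pure_gaussian_cov_def by auto
  have "0 \<le> a * r"
    using form[of "(!) [1, 0, 0, 0]" "(!) [0, 0, 0, 0]"] by (simp add: uncertainty_form_block_cov)
  with r have a: "0 \<le> a" by (simp add: zero_le_mult_iff)
  have b: "1/2 \<le> b"
    using form[of "(!) [0, 0, 1, 0]" "(!) [0, 0, 0, 1]"] by (simp add: uncertainty_form_block_cov)
  show ?thesis
  proof (cases "b = 1/2")
    case True
    with form have "c00 = 0" "c01 = 0" "c10 = 0" "c11 = 0"
      using block_cov_vacuum_imp_uncorrelated[OF r a] by blast+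
    with det True r have "a\<^sup>2 = (1/2)\<^sup>2"
      by (simp add: det_block_cov power_divide)
    with a True show ?thesis by simp
  next
    case False
    with b have "1/2 < b" by simp
    from r a this form det show ?thesis by (rule block_cov_eq_nonvacuum)
  qed
qed

theorem lemma8:
  fixes a b r cp cm phi :: real
  assumes "r > 0"
    and "pure_gaussian_cov (cov_mat a b r cp cm phi)"
  shows "a = b"
  using pure_block_cov_imp_eq[OF assms(1)] assms(2) unfolding cov_mat_eq_block_cov by blast

end
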